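(* Let $f_1,\dots,f_k\in\mathbb{K}[\mathbf{x}]$ be nonzero multihomogeneous polynomials, $<$ a monomial order, and $\mathbf{d}\in\mathbb{Z}^r$ such that $[H_1^k]_{\mathbf{d}}=0$. Then, in the matrix $\mathrm{M_3H}(\{f_1,\dots,f_k\},\mathbf{d},<)$, every row of the form $\mathbf{x}^\beta\cdot f_k$ is linearly independent of the other rows (it is not a linear combination of them).
   Context: $\mathbb{K}$ is a field of characteristic $0$; $\mathbb{K}[\mathbf{x}]$ is the polynomial ring in variables $x_{i,0},\dots,x_{i,n_i}$ ($1\le i\le r$), $\mathbb{Z}^r$-graded with $x_{i,j}$ of degree the $i$-th standard basis vector; $[\,\cdot\,]_{\mathbf{d}}$ denotes multidegree-$\mathbf{d}$ parts (zero if $\mathbf{d}$ has a negative coordinate). $H_1^k:=H_1(\mathcal{K}_\bullet(f_1,\dots,f_k;\mathbb{K}[\mathbf{x}]))$ is the first homology of the Koszul complex of $f_1,\dots,f_k$ over $\mathbb{K}[\mathbf{x}]$, with its multigrading. A Macaulay matrix has columns indexed by monomials and rows representing polynomials (entry = coefficient). The procedure $\mathrm{M_3H}(\{f_1,\dots,f_k\},\mathbf{d},<)$ returns a Macaulay matrix with columns the monomials of $\mathbb{K}[\mathbf{x}]_{\mathbf{d}}$ in decreasing order for $<$, defined recursively: if $k=1$, start from the empty matrix and $\mathfrak{L}=\emptyset$; if $k>1$, start from $\mathrm{M_3H}(\{f_1,\dots,f_{k-1}\},\mathbf{d},<)$ and let $\mathfrak{L}$ be the set of leading monomials of the nonzero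 rows of the Gaussian elimination of $\mathrm{M_3H}(\{f_1,\dots,f_{k-1}\},\mathbf{d}-\deg(f_k),<)$. Then append the row $\mathbf{x}^\beta f_k$ for every monomial $\mathbf{x}^\beta\in\mathbb{K}[\mathbf{x}]_{\mathbf{d}-\deg(f_k)}\setminus\mathfrak{L}$. *)

theory Defs
  imports "HOL-Library.Poly_Mapping"
begin

text \<open>Variables x_{i,j} are encoded as pairs (i,j) with i < r and j \<le> n i
  (0-based block index i).\<close>

type_synonym mon = "(nat \<times> nat) \<Rightarrow>\<^sub>0 nat"
type_synonym 'a mpoly = "mon \<Rightarrow>\<^sub>0 'a"

definition vars :: "nat \<Rightarrow> (nat \<Rightarrow> nat) \<Rightarrow> (nat \<times> nat) set" where
  "vars r n = {(i, j). i < r \<and> j \<le> n i}"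

definition mons :: "nat \<Rightarrow> (nat \<Rightarrow> nat) \<Rightarrow> mon set" where
  "mons r n = {m. Poly_Mapping.keys m \<subseteq> vars r n}"

definition polys :: "nat \<Rightarrow> (nat \<Rightarrow> nat) \<Rightarrow> ('a::zero) mpoly set" where
  "polys r n = {p. Poly_Mapping.keys p \<subseteq> mons r n}"

definition mdeg :: "nat \<Rightarrow> (nat \<Rightarrow> nat) \<Rightarrow> mon \<Rightarrow> int list" where
  "mdeg r n m = map (\<lambda>i. int (\<Sum>j\<le>n i. Poly_Mapping.lookup m (i, j))) [0..<r]"

text \<open>Monomials of K[x]_e (empty if e has a negative coordinate).\<close>
definition mons_deg :: "nat \<Rightarrow> (nat \<Rightarrow> nat) \<Rightarrow> int list \<Rightarrow> mon set" where
  "mons_deg r n e = {m \<in> mons r n. mdeg r n m = e}"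

definition hom_of :: "nat \<Rightarrow> (nat \<Rightarrow> nat) \<Rightarrow> int list \<Rightarrow> ('a::zero) mpoly \<Rightarrow> bool" where
  "hom_of r n e g \<longleftrightarrow> g \<in> polys r n \<and> (\<forall>m\<in>Poly_Mapping.keys g. mdeg r n m = e)"

definition multihomogeneous :: "nat \<Rightarrow> (nat \<Rightarrow> nat) \<Rightarrow> ('a::zero) mpoly \<Rightarrow> bool" where
  "multihomogeneous r n f \<longleftrightarrow> (\<exists>e. hom_of r n e f)"

definition pdeg :: "nat \<Rightarrow> (nat \<Rightarrow> nat) \<Rightarrow> ('a::zero) mpoly \<Rightarrow> int list" where
  "pdeg r n f = mdeg r n (SOME m. m \<in> Poly_Mapping.keys f)"

definition vsub :: "int list \<Rightarrow> int list \<Rightarrow> int list" where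
  "vsub d e = map2 (-) d e"

definition monomial_order :: "nat \<Rightarrow> (nat \<Rightarrow> nat) \<Rightarrow> (mon \<Rightarrow> mon \<Rightarrow> bool) \<Rightarrow> bool" where
  "monomial_order r n lt \<longleftrightarrow>
     (\<forall>a\<in>mons r n. \<not> lt a a) \<and>
     (\<forall>a\<in>mons r n. \<forall>b\<in>mons r n. \<forall>c\<in>mons r n. lt a b \<longrightarrow> lt b c \<longrightarrow> lt a c) \<and>
     (\<forall>a\<in>mons r n. \<forall>b\<in>mons r n. a = b \<or> lt a b \<or> lt b a) \<and>
     (\<forall>a\<in>mons r n. a \<noteq> 0 \<longrightarrow> lt 0 a) \<and>
     (\<forall>a\<in>mons r n. \<forall>b\<in>mons r n. \<forall>c\<in>mons r n. lt a b \<longrightarrow> lt (a + c) (b + c))"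

definition lm :: "(mon \<Rightarrow> mon \<Rightarrow> bool) \<Rightarrow> ('a::zero) mpoly \<Rightarrow> mon" where
  "lm lt p = (THE m. m \<in> Poly_Mapping.keys p \<and> (\<forall>m'\<in>Poly_Mapping.keys p. m' \<noteq> m \<longrightarrow> lt m' m))"

definition lin_comb :: "('i \<Rightarrow> ('a::field) mpoly) \<Rightarrow> 'i set \<Rightarrow> 'a mpoly \<Rightarrow> bool" where
  "lin_comb row I p \<longleftrightarrow>
     (\<exists>A c. finite A \<and> A \<subseteq> I \<and> p = (\<Sum>x\<in>A. Poly_Mapping.single 0 (c x) * row x))"

text \<open>The row x^beta * f_(i+1) (0-based index i into the list fs).\<close>
definition mrow :: "('a::field) mpoly list \<Rightarrow> nat \<times> mon \<Rightarrow> 'a mpoly" where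
  "mrow fs x = Poly_Mapping.single (snd x) 1 * fs ! fst x"

text \<open>Rows of M3H({f_1..f_k}, d, <), indexed by pairs (i, beta) meaning the row
  x^beta * f_(i+1). The set of leading monomials of the nonzero rows of the
  Gaussian elimination of a matrix equals the set of leading monomials of the
  nonzero elements of its row space.\<close>
fun M3H :: "nat \<Rightarrow> (nat \<Rightarrow> nat) \<Rightarrow> (mon \<Rightarrow> mon \<Rightarrow> bool) \<Rightarrow> ('a::field) mpoly list
             \<Rightarrow> nat \<Rightarrow> int list \<Rightarrow> (nat \<times> mon) set" where
  "M3H r n lt fs 0 d = {}"
| "M3H r n lt fs (Suc k) d =
     (let e = vsub d (pdeg r n (fs ! k));
          L = {lm lt p | p. p \<noteq> 0 \<and> lin_comb (mrow fs) (M3H r n lt fs k e) p}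
      in M3H r n lt fs k d \<union> {(k, \<beta>) | \<beta>. \<beta> \<in> mons_deg r n e \<and> \<beta> \<notin> L})"

text \<open>[H_1(K(f_1..f_k))]_d = 0: every multidegree-d Koszul 1-cycle
  (component l in degree d - deg f_l) is a Koszul boundary.\<close>
definition H1_vanishes :: "nat \<Rightarrow> (nat \<Rightarrow> nat) \<Rightarrow> ('a::field) mpoly list \<Rightarrow> int list \<Rightarrow> bool" where
  "H1_vanishes r n fs d \<longleftrightarrow>
     (\<forall>g :: nat \<Rightarrow> 'a mpoly.
        (\<forall>l<length fs. hom_of r n (vsub d (pdeg r n (fs ! l))) (g l)) \<and>
        (\<Sum>l<length fs. g l * fs ! l) = 0
        \<longrightarrow> (\<exists>h :: nat \<Rightarrow> nat \<Rightarrow> 'a mpoly.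
               (\<forall>i j. h i j \<in> polys r n) \<and>
               (\<forall>l<length fs. g l = (\<Sum>i<l. h i l * fs ! i)
                                    - (\<Sum>j\<in>{l<..<length fs}. h l j * fs ! j))))"

end

theory Submission
  imports Defs HOL.Modules
begin

(* If the row x^beta f_k were a combination of the other rows, collecting coefficients would
   give a syzygy (g_1, ..., g_k) of multidegree d whose last entry has coefficient 1 at beta and
   is otherwise supported on monomials gamma for which x^gamma f_k is also a row of the matrix.
   Since [H_1^k]_d = 0 this syzygy is a Koszul boundary, so g_k lies in the ideal
   (f_1, ..., f_(k-1)) in degree e = d - deg f_k.  The rows of M3H({f_1, ..., f_(k-1)}, e, <)
   span the whole degree-e part of that ideal: a row x^gamma f_j left out by the construction
   has gamma = lm(p) for some p in the span of the earlier rows, and p f_j expresses it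
   through earlier rows and rows x^m f_j with m < gamma.  Hence lm(g_k) lies in the set L
   of the construction, whereas by construction neither beta nor any gamma above does. *)

section \<open>Multidegrees\<close>

lemma length_mdeg [simp]: "length (mdeg r n m) = r"
  by (simp add: mdeg_def)

lemma length_pdeg [simp]: "length (pdeg r n f) = r"
  by (simp add: pdeg_def)

lemma length_vsub [simp]: "length (vsub d e) = min (length d) (length e)"
  by (simp add: vsub_def)

lemma mdeg_add: "mdeg r n (a + b) = map2 (+) (mdeg r n a) (mdeg r n b)"
  by (rule nth_equalityI) (simp_all add: mdeg_def lookup_add sum.distrib)

lemma vadd_vsub_cancel: "length a = length b \<Longrightarrow> map2 (+) (vsub a b) b = a"
  by (rule nth_equalityI) (simp_all add: vsub_def)

lemma vsub_vadd_cancel: "length a = length b \<Longrightarrow> vsub (map2 (+) a b) b = a"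
  by (rule nth_equalityI) (simp_all add: vsub_def)

lemma vsub_swap: "vsub (vsub d a) b = vsub (vsub d b) a"
  by (rule nth_equalityI) (auto simp: vsub_def)

lemma finite_mons_deg: "finite (mons_deg r n e)"
proof -
  define b where "b = (\<Sum>i<r. nat (e ! i))"
  have "vars r n = (SIGMA i:{..<r}. {..n i})"
    unfolding vars_def by auto
  then have "finite (vars r n)"
    by simp
  then have "finite {f. \<forall>x. (x \<in> vars r n \<longrightarrow> f x \<in> {..b}) \<and> (x \<notin> vars r n \<longrightarrow> f x = 0)}"
    by (intro finite_set_of_finite_funs) auto
  moreover have "Poly_Mapping.lookup ` mons_deg r n e \<subseteq>
      {f. \<forall>x. (x \<in> vars r n \<longrightarrow> f x \<in> {..b}) \<and> (x \<notin> vars r n \<longrightarrow> f x = 0)}"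
  proof clarify
    fix m x assume m: "m \<in> mons_deg r n e"
    show "(x \<in> vars r n \<longrightarrow> Poly_Mapping.lookup m x \<in> {..b}) \<and>
          (x \<notin> vars r n \<longrightarrow> Poly_Mapping.lookup m x = 0)"
    proof (intro conjI impI)
      assume "x \<in> vars r n"
      then obtain i j where x: "x = (i, j)" "i < r" "j \<le> n i"
        unfolding vars_def by blast
      have "Poly_Mapping.lookup m (i, j) \<le> (\<Sum>j'\<le>n i. Poly_Mapping.lookup m (i, j'))"
        using x by (intro member_le_sum[where f = "\<lambda>j'. Poly_Mapping.lookup m (i, j')"]) auto
      also have "\<dots> = nat (mdeg r n m ! i)"
        using x(2) by (simp add: mdeg_def del: of_nat_sum)
      also have "\<dots> = nat (e ! i)"
        using m by (simp add: mons_deg_def)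
      also have "\<dots> \<le> b"
        unfolding b_def using x(2) by (intro member_le_sum[where f = "\<lambda>i. nat (e ! i)"]) auto
      finally show "Poly_Mapping.lookup m x \<in> {..b}"
        using x(1) by simp
    next
      assume "x \<notin> vars r n"
      with m have "x \<notin> Poly_Mapping.keys m"
        unfolding mons_deg_def mons_def by blast
      then show "Poly_Mapping.lookup m x = 0"
        by (simp add: in_keys_iff)
    qed
  qed
  ultimately have "finite (Poly_Mapping.lookup ` mons_deg r n e)"
    by (rule finite_subset[rotated])
  then show ?thesis
    by (rule finite_imageD) (simp add: inj_on_def flip: poly_mapping.lookup_inject)
qed

section \<open>Homogeneous polynomials\<close>

lemma hom_of_iff: "hom_of r n e p \<longleftrightarrow> Poly_Mapping.keys p \<subseteq> mons_deg r n e"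
  unfolding hom_of_def polys_def mons_deg_def by auto

lemma mons_add: "a \<in> mons r n \<Longrightarrow> b \<in> mons r n \<Longrightarrow> a + b \<in> mons r n"
  unfolding mons_def using keys_add[of a b] by blast

lemma hom_of_monomial: "m \<in> mons_deg r n a \<Longrightarrow> hom_of r n a (Poly_Mapping.single m c)"
  by (simp add: hom_of_iff)

lemma hom_of_mult:
  assumes "hom_of r n a p" "hom_of r n b q"
  shows "hom_of r n (map2 (+) a b) (p * q)"
  unfolding hom_of_iff
proof
  fix m assume "m \<in> Poly_Mapping.keys (p * q)"
  then obtain u v where "u \<in> Poly_Mapping.keys p" "v \<in> Poly_Mapping.keys q" "m = u + v"
    using keys_mult by blast
  with assms have "u \<in> mons_deg r n a" "v \<in> mons_deg r n b"
    by (auto simp: hom_of_iff)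
  with \<open>m = u + v\<close> show "m \<in> mons_deg r n (map2 (+) a b)"
    by (simp add: mons_deg_def mdeg_add mons_add)
qed

lemma hom_of_pdeg:
  assumes "f \<noteq> 0" "multihomogeneous r n f"
  shows "hom_of r n (pdeg r n f) f"
proof -
  obtain e where e: "hom_of r n e f"
    using assms(2) unfolding multihomogeneous_def by blast
  have "(SOME m. m \<in> Poly_Mapping.keys f) \<in> Poly_Mapping.keys f"
    using assms(1) by (metis keys_eq_empty some_in_eq)
  with e have "pdeg r n f = e"
    unfolding pdeg_def hom_of_def by blast
  with e show ?thesis by simp
qed

lemma hom_of_nth:
  assumes "\<forall>f\<in>set fs. f \<noteq> 0 \<and> multihomogeneous r n f" "i < length fs"
  shows "hom_of r n (pdeg r n (fs ! i)) (fs ! i)"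
  using assms by (intro hom_of_pdeg) auto

section \<open>Row spaces\<close>

interpretation lin:
  module "\<lambda>a (p :: 'm::comm_monoid_add \<Rightarrow>\<^sub>0 'a::comm_ring_1). Poly_Mapping.single 0 a * p"
  by standard (simp_all add: single_add distrib_left distrib_right mult_single flip: mult.assoc)

lemma lin_comb_iff_span: "lin_comb row I p \<longleftrightarrow> p \<in> lin.span (row ` I)"
proof
  assume "lin_comb row I p"
  then obtain A c where A: "A \<subseteq> I" "p = (\<Sum>x\<in>A. Poly_Mapping.single 0 (c x) * row x)"
    unfolding lin_comb_def by blast
  show "p \<in> lin.span (row ` I)"
    unfolding A(2)
    by (rule lin.span_sum, rule lin.span_scale, rule lin.span_base) (use A(1) in blast)
next
  assume "p \<in> lin.span (row ` I)"
  then obtain t u where t: "finite t" "t \<subseteq> row ` I" "p = (\<Sum>v\<in>t. Poly_Mapping.single 0 (u v) * v)"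
    unfolding lin.span_explicit by blast
  from t(2) obtain A where A: "A \<subseteq> I" "inj_on row A" "t = row ` A"
    unfolding subset_image_inj by blast
  have "finite A"
    using t(1) A(2,3) finite_imageD by blast
  moreover have "p = (\<Sum>x\<in>A. Poly_Mapping.single 0 (u (row x)) * row x)"
    unfolding t(3) A(3) using A(2) by (rule sum.reindex_cong) simp_all
  ultimately show "lin_comb row I p"
    unfolding lin_comb_def using A(1) by (intro exI[of _ A] exI[of _ "\<lambda>x. u (row x)"]) simp
qed

lemma keys_smult_subset: "Poly_Mapping.keys (Poly_Mapping.single 0 c * p) \<subseteq> Poly_Mapping.keys p"
  using keys_mult[of "Poly_Mapping.single 0 c" p] by (auto split: if_splits)

lemma subspace_hom_of: "lin.subspace {p :: 'a::comm_ring_1 mpoly. hom_of r n e p}"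
proof (rule lin.subspaceI)
  fix p q :: "'a mpoly" and c :: 'a
  assume "p \<in> {p. hom_of r n e p}" "q \<in> {p. hom_of r n e p}"
  then show "p + q \<in> {p. hom_of r n e p}" "Poly_Mapping.single 0 c * p \<in> {p. hom_of r n e p}"
    using keys_add[of p q] keys_smult_subset[of c p] by (auto simp: hom_of_iff)
qed (simp add: hom_of_iff)

lemma sum_single_lookup:
  "(\<Sum>m\<in>Poly_Mapping.keys p. Poly_Mapping.single m (Poly_Mapping.lookup p m)) = p"
  by (rule poly_mapping_eqI) (simp add: lookup_sum lookup_single when_def in_keys_iff sum.delta')

lemma mult_eq_sum_monomials:
  fixes p f :: "'m::comm_monoid_add \<Rightarrow>\<^sub>0 'a::comm_ring_1"
  shows "p * f = (\<Sum>m\<in>Poly_Mapping.keys p.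
                    Poly_Mapping.single 0 (Poly_Mapping.lookup p m) * (Poly_Mapping.single m 1 * f))"
proof -
  have "p * f = (\<Sum>m\<in>Poly_Mapping.keys p. Poly_Mapping.single m (Poly_Mapping.lookup p m) * f)"
    by (subst (1) sum_single_lookup[symmetric]) (rule sum_distrib_right)
  also have "\<dots> = (\<Sum>m\<in>Poly_Mapping.keys p.
                      Poly_Mapping.single 0 (Poly_Mapping.lookup p m) * (Poly_Mapping.single m 1 * f))"
    by (simp add: mult_single flip: mult.assoc)
  finally show ?thesis .
qed

lemma monomial_mult_in_span:
  fixes p f :: "'m::comm_monoid_add \<Rightarrow>\<^sub>0 'a::field"
  assumes "g \<in> Poly_Mapping.keys p" "p * f \<in> lin.span V"
    and "\<And>m. m \<in> Poly_Mapping.keys p - {g} \<Longrightarrow> Poly_Mapping.single m 1 * f \<in> lin.span V"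
  shows "Poly_Mapping.single g 1 * f \<in> lin.span V"
proof -
  define c where "c = Poly_Mapping.lookup p g"
  define R where "R = (\<Sum>m\<in>Poly_Mapping.keys p - {g}.
                          Poly_Mapping.single 0 (Poly_Mapping.lookup p m) * (Poly_Mapping.single m 1 * f))"
  have "c \<noteq> 0"
    using assms(1) unfolding c_def by (simp add: in_keys_iff)
  have "p * f = Poly_Mapping.single 0 c * (Poly_Mapping.single g 1 * f) + R"
    unfolding mult_eq_sum_monomials[of p f] c_def R_def using assms(1) by (simp add: sum.remove)
  moreover have "R \<in> lin.span V"
    unfolding R_def using assms(3) by (intro lin.span_sum lin.span_scale)
  ultimately have "Poly_Mapping.single 0 c * (Poly_Mapping.single g 1 * f) \<in> lin.span V"
    using assms(2) lin.span_diff[of "p * f" V R] by simp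
  then have "Poly_Mapping.single 0 (inverse c) * (Poly_Mapping.single 0 c * (Poly_Mapping.single g 1 * f))
      \<in> lin.span V"
    by (rule lin.span_scale)
  with \<open>c \<noteq> 0\<close> show ?thesis by simp
qed

section \<open>Monomial orders and leading monomials\<close>

lemma monomial_order_irrefl: "monomial_order r n lt \<Longrightarrow> a \<in> mons r n \<Longrightarrow> \<not> lt a a"
  unfolding monomial_order_def by (elim conjE) (erule bspec)

lemma monomial_order_trans:
  "monomial_order r n lt \<Longrightarrow> a \<in> mons r n \<Longrightarrow> b \<in> mons r n \<Longrightarrow> c \<in> mons r n \<Longrightarrow> lt a b \<Longrightarrow> lt b c \<Longrightarrow> lt a c"
  unfolding monomial_order_def by (elim conjE) meson

lemma monomial_order_total:
  "monomial_order r n lt \<Longrightarrow> a \<in> mons r n \<Longrightarrow> b \<in> mons r n \<Longrightarrow> a = b \<or> lt a b \<or> lt b a"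
  unfolding monomial_order_def by (elim conjE) meson

lemma wf_monomial_order_on:
  assumes mo: "monomial_order r n lt" and S: "finite S" "S \<subseteq> mons r n"
  shows "wf {(a, b). a \<in> S \<and> b \<in> S \<and> lt a b}" and "wf {(a, b). a \<in> S \<and> b \<in> S \<and> lt b a}"
proof -
  let ?R = "{(a, b). a \<in> S \<and> b \<in> S \<and> lt a b}"
  have "finite ?R"
    using S(1) by (intro finite_subset[of ?R "S \<times> S"]) auto
  moreover have "acyclic ?R"
  proof -
    have "trans ?R"
      using monomial_order_trans[OF mo] S(2) unfolding trans_def by blast
    then show ?thesis
      unfolding acyclic_irrefl trancl_id[OF \<open>trans ?R\<close>] irrefl_def
      using monomial_order_irrefl[OF mo] S(2) by blast
  qed
  ultimately have "wf ?R" "wf (?R\<inverse>)"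
    by (simp_all add: finite_acyclic_wf finite_acyclic_wf_converse)
  moreover have "?R\<inverse> = {(a, b). a \<in> S \<and> b \<in> S \<and> lt b a}"
    by auto
  ultimately show "wf ?R" "wf {(a, b). a \<in> S \<and> b \<in> S \<and> lt b a}"
    by simp_all
qed

lemma monomial_order_induct:
  assumes "monomial_order r n lt" "finite S" "S \<subseteq> mons r n" "g \<in> S"
    and "\<And>g. g \<in> S \<Longrightarrow> (\<And>m. m \<in> S \<Longrightarrow> lt m g \<Longrightarrow> P m) \<Longrightarrow> P g"
  shows "P g"
  using wf_monomial_order_on(1)[OF assms(1-3)] assms(4)
proof (induction g rule: wf_induct_rule)
  case (less g)
  with assms(5) show ?case by simp
qed

lemma lm_greatest:
  assumes mo: "monomial_order r n lt" and p: "Poly_Mapping.keys p \<subseteq> mons r n" "p \<noteq> 0"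
  shows "lm lt p \<in> Poly_Mapping.keys p"
    and "\<And>m. m \<in> Poly_Mapping.keys p \<Longrightarrow> m \<noteq> lm lt p \<Longrightarrow> lt m (lm lt p)"
proof -
  let ?K = "Poly_Mapping.keys p"
  have "wf {(a, b). a \<in> ?K \<and> b \<in> ?K \<and> lt b a}"
    using wf_monomial_order_on(2)[OF mo finite_keys p(1)] .
  moreover obtain m0 where "m0 \<in> ?K"
    using p(2) by fastforce
  ultimately obtain m where m: "m \<in> ?K" "\<And>m'. m' \<in> ?K \<Longrightarrow> \<not> lt m m'"
    by (rule wfE_min) blast
  have max: "lt m' m" if "m' \<in> ?K" "m' \<noteq> m" for m'
    using monomial_order_total[OF mo, of m' m] m that p(1) by blast
  have "lm lt p = m"
    unfolding lm_def
  proof (rule the_equality)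
    fix m2 assume m2: "m2 \<in> ?K \<and> (\<forall>m'\<in>?K. m' \<noteq> m2 \<longrightarrow> lt m' m2)"
    show "m2 = m"
    proof (rule ccontr)
      assume "m2 \<noteq> m"
      with m2 m(1) have "lt m m2" by metis
      with m2 m(2) show False by blast
    qed
  qed (use m(1) max in blast)
  with m(1) max show "lm lt p \<in> ?K" "\<And>m'. m' \<in> ?K \<Longrightarrow> m' \<noteq> lm lt p \<Longrightarrow> lt m' (lm lt p)"
    by auto
qed

section \<open>Homogeneous components\<close>

definition hom_comp :: "nat \<Rightarrow> (nat \<Rightarrow> nat) \<Rightarrow> int list \<Rightarrow> ('a::zero) mpoly \<Rightarrow> 'a mpoly" where
  "hom_comp r n e p = Poly_Mapping.mapp (\<lambda>m c. if mdeg r n m = e then c else 0) p"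

lemma lookup_hom_comp:
  "Poly_Mapping.lookup (hom_comp r n e p) m =
     (if mdeg r n m = e then Poly_Mapping.lookup p m else 0)"
  unfolding hom_comp_def lookup_mapp by (simp add: in_keys_iff when_def)

lemma keys_hom_comp:
  "Poly_Mapping.keys (hom_comp r n e p) \<subseteq> {m \<in> Poly_Mapping.keys p. mdeg r n m = e}"
  by (auto simp: in_keys_iff lookup_hom_comp split: if_splits)

lemma hom_comp_sum:
  "hom_comp r n e (\<Sum>x\<in>X. q x) = (\<Sum>x\<in>X. hom_comp r n e (q x :: 'a::comm_monoid_add mpoly))"
  by (rule poly_mapping_eqI) (simp add: lookup_hom_comp lookup_sum)

lemma hom_comp_eq_self: "\<forall>m\<in>Poly_Mapping.keys p. mdeg r n m = e \<Longrightarrow> hom_comp r n e p = p"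
  by (rule poly_mapping_eqI) (auto simp: lookup_hom_comp in_keys_iff)

lemma hom_comp_eq_0: "\<forall>m\<in>Poly_Mapping.keys p. mdeg r n m \<noteq> e \<Longrightarrow> hom_comp r n e p = 0"
  by (rule poly_mapping_eqI) (auto simp: lookup_hom_comp in_keys_iff)

lemma mdeg_keys_monomial_mult:
  assumes "hom_of r n c f" "x \<in> Poly_Mapping.keys (Poly_Mapping.single m a * f)"
  shows "mdeg r n x = map2 (+) (mdeg r n m) c"
proof -
  obtain u v where uv: "u \<in> Poly_Mapping.keys (Poly_Mapping.single m a)"
    "v \<in> Poly_Mapping.keys f" "x = u + v"
    using keys_mult assms(2) by blast
  from uv(1) have "u = m"
    by (simp split: if_splits)
  moreover from uv(2) assms(1) have "mdeg r n v = c"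
    by (auto simp: hom_of_iff mons_deg_def)
  ultimately show ?thesis
    using uv(3) by (simp add: mdeg_add)
qed

lemma hom_comp_monomial_mult:
  assumes f: "hom_of r n c f" and len: "length c = r" "length e = r"
  shows "hom_comp r n e (Poly_Mapping.single m a * f) =
           hom_comp r n (vsub e c) (Poly_Mapping.single m a) * f"
proof (cases "mdeg r n m = vsub e c")
  case True
  then have "\<forall>x\<in>Poly_Mapping.keys (Poly_Mapping.single m a * f). mdeg r n x = e"
    using mdeg_keys_monomial_mult[OF f] len by (simp add: vadd_vsub_cancel)
  with True show ?thesis
    by (simp add: hom_comp_eq_self)
next
  case False
  have "mdeg r n x \<noteq> e" if "x \<in> Poly_Mapping.keys (Poly_Mapping.single m a * f)" for x
  proof
    assume "mdeg r n x = e"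
    then have "vsub (map2 (+) (mdeg r n m) c) c = vsub e c"
      using mdeg_keys_monomial_mult[OF f that] by simp
    with False len(1) show False
      by (simp add: vsub_vadd_cancel)
  qed
  with False show ?thesis
    by (simp add: hom_comp_eq_0)
qed

lemma hom_comp_mult:
  assumes "hom_of r n c f" "length c = r" "length e = r"
  shows "hom_comp r n e (p * f) = hom_comp r n (vsub e c) p * f"
proof -
  let ?mon = "\<lambda>m. Poly_Mapping.single m (Poly_Mapping.lookup p m)"
  have "hom_comp r n e (p * f) = hom_comp r n e (\<Sum>m\<in>Poly_Mapping.keys p. ?mon m * f)"
    by (simp only: sum_single_lookup flip: sum_distrib_right)
  also have "\<dots> = (\<Sum>m\<in>Poly_Mapping.keys p. hom_comp r n (vsub e c) (?mon m) * f)"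
    by (simp only: hom_comp_sum hom_comp_monomial_mult[OF assms])
  also have "\<dots> = hom_comp r n (vsub e c) p * f"
    by (simp only: sum_single_lookup flip: hom_comp_sum sum_distrib_right)
  finally show ?thesis .
qed

section \<open>Macaulay matrices\<close>

definition macaulay_rows ::
    "nat \<Rightarrow> (nat \<Rightarrow> nat) \<Rightarrow> ('a::zero) mpoly list \<Rightarrow> nat \<Rightarrow> int list \<Rightarrow> (nat \<times> mon) set" where
  "macaulay_rows r n fs j d = {(i, \<gamma>). i < j \<and> \<gamma> \<in> mons_deg r n (vsub d (pdeg r n (fs ! i)))}"

lemma hom_of_mrow:
  assumes "\<forall>f\<in>set fs. f \<noteq> 0 \<and> multihomogeneous r n f" "j \<le> length fs" "length d = r"
    and "x \<in> macaulay_rows r n fs j d"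
  shows "hom_of r n d (mrow fs x)"
proof -
  obtain i \<gamma> where x: "x = (i, \<gamma>)" "i < j" "\<gamma> \<in> mons_deg r n (vsub d (pdeg r n (fs ! i)))"
    using assms(4) unfolding macaulay_rows_def by blast
  have "hom_of r n (map2 (+) (vsub d (pdeg r n (fs ! i))) (pdeg r n (fs ! i))) (mrow fs x)"
    unfolding x(1) mrow_def fst_conv snd_conv
    using x assms(1,2) by (intro hom_of_mult hom_of_monomial hom_of_nth) auto
  then show ?thesis
    using assms(3) by (simp add: vadd_vsub_cancel)
qed

lemma hom_of_macaulay_span:
  assumes "\<forall>f\<in>set fs. f \<noteq> 0 \<and> multihomogeneous r n f" "j \<le> length fs" "length d = r"
    and "p \<in> lin.span (mrow fs ` macaulay_rows r n fs j d)"
  shows "hom_of r n d p"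
proof -
  have "mrow fs ` macaulay_rows r n fs j d \<subseteq> {p. hom_of r n d p}"
    using hom_of_mrow[OF assms(1-3)] by blast
  then have "lin.span (mrow fs ` macaulay_rows r n fs j d) \<subseteq> {p. hom_of r n d p}"
    using subspace_hom_of by (rule lin.span_minimal)
  with assms(4) show ?thesis by blast
qed

lemma mult_nth_in_macaulay_span:
  assumes "hom_of r n (vsub d (pdeg r n (fs ! i))) q" "i < j"
  shows "q * fs ! i \<in> lin.span (mrow fs ` macaulay_rows r n fs j d)"
proof -
  have "q * fs ! i =
      (\<Sum>m\<in>Poly_Mapping.keys q. Poly_Mapping.single 0 (Poly_Mapping.lookup q m) * mrow fs (i, m))"
    unfolding mrow_def by (simp add: mult_eq_sum_monomials[of q])
  also have "\<dots> \<in> lin.span (mrow fs ` macaulay_rows r n fs j d)"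
    by (rule lin.span_sum, rule lin.span_scale, rule lin.span_base)
      (use assms in \<open>auto simp: macaulay_rows_def hom_of_iff\<close>)
  finally show ?thesis .
qed

lemma macaulay_span_mult:
  assumes f: "hom_of r n c f" and len: "length c = r" "length d = r"
    and p: "p \<in> lin.span (mrow fs ` macaulay_rows r n fs j (vsub d c))"
  shows "p * f \<in> lin.span (mrow fs ` macaulay_rows r n fs j d)"
proof -
  let ?V = "lin.span (mrow fs ` macaulay_rows r n fs j d)"
  have "lin.subspace {p. p * f \<in> ?V}"
  proof (rule lin.subspaceI)
    fix p q and a :: 'a
    assume "p \<in> {p. p * f \<in> ?V}" "q \<in> {p. p * f \<in> ?V}"
    then show "p + q \<in> {p. p * f \<in> ?V}" "Poly_Mapping.single 0 a * p \<in> {p. p * f \<in> ?V}"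
      by (simp_all add: distrib_right lin.span_add lin.span_scale mult.assoc)
  qed (simp add: lin.span_zero)
  moreover have "mrow fs x \<in> {p. p * f \<in> ?V}" if row: "x \<in> macaulay_rows r n fs j (vsub d c)" for x
  proof -
    obtain i \<gamma> where x: "x = (i, \<gamma>)" "i < j"
      "\<gamma> \<in> mons_deg r n (vsub (vsub d c) (pdeg r n (fs ! i)))"
      using row unfolding macaulay_rows_def by blast
    have "hom_of r n (map2 (+) (vsub (vsub d (pdeg r n (fs ! i))) c) c)
        (Poly_Mapping.single \<gamma> 1 * f)"
      using x(3) f by (intro hom_of_mult hom_of_monomial) (simp_all add: vsub_swap)
    then have "hom_of r n (vsub d (pdeg r n (fs ! i))) (Poly_Mapping.single \<gamma> 1 * f)"
      using len by (simp add: vadd_vsub_cancel)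
    then have "Poly_Mapping.single \<gamma> 1 * f * fs ! i \<in> ?V"
      using x(2) by (rule mult_nth_in_macaulay_span)
    then show ?thesis
      unfolding x(1) mrow_def by (simp add: ac_simps)
  qed
  ultimately have "lin.span (mrow fs ` macaulay_rows r n fs j (vsub d c)) \<subseteq> {p. p * f \<in> ?V}"
    by (intro lin.span_minimal) blast
  with p show ?thesis by blast
qed

lemma hom_ideal_elem_in_macaulay_span:
  assumes fs: "\<forall>f\<in>set fs. f \<noteq> 0 \<and> multihomogeneous r n f"
    and "j \<le> length fs" "length e = r" "hom_of r n e p"
    and h: "\<forall>i<j. h i \<in> polys r n" and p: "p = (\<Sum>i<j. h i * fs ! i)"
  shows "p \<in> lin.span (mrow fs ` macaulay_rows r n fs j e)"
proof -
  let ?c = "\<lambda>i. pdeg r n (fs ! i)"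
  have "p = hom_comp r n e p"
    using assms(4) by (simp add: hom_comp_eq_self hom_of_iff mons_deg_def subset_eq)
  also have "\<dots> = (\<Sum>i<j. hom_comp r n (vsub e (?c i)) (h i) * fs ! i)"
    unfolding p hom_comp_sum using assms(2,3) hom_of_nth[OF fs]
    by (intro sum.cong refl hom_comp_mult) auto
  also have "\<dots> \<in> lin.span (mrow fs ` macaulay_rows r n fs j e)"
  proof (rule lin.span_sum, rule mult_nth_in_macaulay_span)
    fix i assume "i \<in> {..<j}"
    then show "i < j" by simp
    show "hom_of r n (vsub e (?c i)) (hom_comp r n (vsub e (?c i)) (h i))"
      using keys_hom_comp[of r n "vsub e (?c i)" "h i"] h \<open>i < j\<close>
      unfolding hom_of_iff polys_def mons_deg_def by blast
  qed
  finally show ?thesis .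
qed

definition lead_mons :: "nat \<Rightarrow> (nat \<Rightarrow> nat) \<Rightarrow> (mon \<Rightarrow> mon \<Rightarrow> bool) \<Rightarrow> ('a::field) mpoly list
    \<Rightarrow> nat \<Rightarrow> int list \<Rightarrow> mon set" where
  "lead_mons r n lt fs k e = {lm lt p | p. p \<noteq> 0 \<and> lin_comb (mrow fs) (M3H r n lt fs k e) p}"

lemma M3H_Suc:
  "M3H r n lt fs (Suc k) d = M3H r n lt fs k d \<union>
     {(k, \<beta>) | \<beta>. \<beta> \<in> mons_deg r n (vsub d (pdeg r n (fs ! k))) \<and>
                    \<beta> \<notin> lead_mons r n lt fs k (vsub d (pdeg r n (fs ! k)))}"
  by (simp add: lead_mons_def Let_def)

declare M3H.simps(2) [simp del]

lemma M3H_subset_macaulay_rows: "M3H r n lt fs j d \<subseteq> macaulay_rows r n fs j d"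
  by (induction j) (auto simp: M3H_Suc macaulay_rows_def)

lemma M3H_subset_Suc: "M3H r n lt fs k d \<subseteq> M3H r n lt fs (Suc k) d"
  by (simp add: M3H_Suc)

lemma last_row_mem_M3H_iff:
  "(k, \<beta>) \<in> M3H r n lt fs (Suc k) d \<longleftrightarrow>
     \<beta> \<in> mons_deg r n (vsub d (pdeg r n (fs ! k))) \<and>
     \<beta> \<notin> lead_mons r n lt fs k (vsub d (pdeg r n (fs ! k)))"
  using M3H_subset_macaulay_rows[of r n lt fs k d] by (auto simp: M3H_Suc macaulay_rows_def)

lemma lead_mon_row_in_span_M3H:
  assumes fs: "\<forall>f\<in>set fs. f \<noteq> 0 \<and> multihomogeneous r n f" and mo: "monomial_order r n lt"
    and k: "k < length fs" and len: "length d = r"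
    and span_k: "lin.span (mrow fs ` M3H r n lt fs k d) =
                 lin.span (mrow fs ` macaulay_rows r n fs k d)"
    and g: "g \<in> lead_mons r n lt fs k (vsub d (pdeg r n (fs ! k)))"
    and lower: "\<And>m. m \<in> mons_deg r n (vsub d (pdeg r n (fs ! k))) \<Longrightarrow> lt m g \<Longrightarrow>
                 mrow fs (k, m) \<in> lin.span (mrow fs ` M3H r n lt fs (Suc k) d)"
  shows "mrow fs (k, g) \<in> lin.span (mrow fs ` M3H r n lt fs (Suc k) d)"
proof -
  define e where "e = vsub d (pdeg r n (fs ! k))"
  let ?V = "lin.span (mrow fs ` M3H r n lt fs (Suc k) d)"
  obtain p where p: "p \<noteq> 0" "lin_comb (mrow fs) (M3H r n lt fs k e) p" "lm lt p = g"
    using g unfolding lead_mons_def e_def by blast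
  have "p \<in> lin.span (mrow fs ` M3H r n lt fs k e)"
    using p(2) by (simp add: lin_comb_iff_span)
  then have p_span: "p \<in> lin.span (mrow fs ` macaulay_rows r n fs k e)"
    by (rule subsetD[OF lin.span_mono[OF image_mono[OF M3H_subset_macaulay_rows]]])
  have "length e = r"
    using len by (simp add: e_def)
  with p_span k have "hom_of r n e p"
    by (intro hom_of_macaulay_span[OF fs]) simp_all
  then have keys_p: "Poly_Mapping.keys p \<subseteq> mons_deg r n e"
    by (simp add: hom_of_iff)
  then have keys_p_mons: "Poly_Mapping.keys p \<subseteq> mons r n"
    by (auto simp: mons_deg_def)
  have "p * fs ! k \<in> lin.span (mrow fs ` macaulay_rows r n fs k d)"
    using hom_of_nth[OF fs k] len p_span[unfolded e_def] by (intro macaulay_span_mult) simp_all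
  then have pf: "p * fs ! k \<in> ?V"
    using span_k lin.span_mono[OF image_mono[OF M3H_subset_Suc]] by blast
  have lower_terms: "Poly_Mapping.single m 1 * fs ! k \<in> ?V"
    if m: "m \<in> Poly_Mapping.keys p - {g}" for m
  proof -
    have "lt m g"
      using lm_greatest(2)[OF mo keys_p_mons p(1)] m p(3) by blast
    with m keys_p show ?thesis
      using lower[of m] by (auto simp: mrow_def e_def)
  qed
  have "g \<in> Poly_Mapping.keys p"
    using lm_greatest(1)[OF mo keys_p_mons p(1)] p(3) by simp
  from monomial_mult_in_span[OF this pf lower_terms] show ?thesis
    by (simp add: mrow_def)
qed

lemma last_row_in_span_M3H:
  assumes fs: "\<forall>f\<in>set fs. f \<noteq> 0 \<and> multihomogeneous r n f" and mo: "monomial_order r n lt"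
    and k: "k < length fs" and len: "length d = r"
    and span_k: "lin.span (mrow fs ` M3H r n lt fs k d) =
                 lin.span (mrow fs ` macaulay_rows r n fs k d)"
    and \<beta>: "\<beta> \<in> mons_deg r n (vsub d (pdeg r n (fs ! k)))"
  shows "mrow fs (k, \<beta>) \<in> lin.span (mrow fs ` M3H r n lt fs (Suc k) d)"
proof -
  let ?S = "mons_deg r n (vsub d (pdeg r n (fs ! k)))"
  have S: "finite ?S" "?S \<subseteq> mons r n"
    by (simp_all add: finite_mons_deg) (auto simp: mons_deg_def)
  show ?thesis
  proof (rule monomial_order_induct[OF mo S \<beta>])
    fix g assume g: "g \<in> ?S"
      and IH: "\<And>m. m \<in> ?S \<Longrightarrow> lt m g \<Longrightarrow> mrow fs (k, m) \<in> lin.span (mrow fs ` M3H r n lt fs (Suc k) d)"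
    show "mrow fs (k, g) \<in> lin.span (mrow fs ` M3H r n lt fs (Suc k) d)"
    proof (cases "g \<in> lead_mons r n lt fs k (vsub d (pdeg r n (fs ! k)))")
      case True
      from lead_mon_row_in_span_M3H[OF fs mo k len span_k this IH] show ?thesis .
    next
      case False
      with g show ?thesis
        by (intro lin.span_base imageI) (simp add: last_row_mem_M3H_iff)
    qed
  qed
qed

theorem span_M3H_eq_span_macaulay_rows:
  assumes fs: "\<forall>f\<in>set fs. f \<noteq> 0 \<and> multihomogeneous r n f" and mo: "monomial_order r n lt"
    and "j \<le> length fs" "length d = r"
  shows "lin.span (mrow fs ` M3H r n lt fs j d) = lin.span (mrow fs ` macaulay_rows r n fs j d)"
  using assms(3)
proof (induction j)
  case 0
  show ?case by (simp add: macaulay_rows_def)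
next
  case (Suc k)
  then have span_k:
    "lin.span (mrow fs ` M3H r n lt fs k d) = lin.span (mrow fs ` macaulay_rows r n fs k d)"
    by simp
  have "mrow fs x \<in> lin.span (mrow fs ` M3H r n lt fs (Suc k) d)"
    if x: "x \<in> macaulay_rows r n fs (Suc k) d" for x
  proof -
    obtain i \<gamma> where "x = (i, \<gamma>)" "i < Suc k" "\<gamma> \<in> mons_deg r n (vsub d (pdeg r n (fs ! i)))"
      using x unfolding macaulay_rows_def by blast
    then consider "x \<in> macaulay_rows r n fs k d"
      | "x = (k, \<gamma>)" "\<gamma> \<in> mons_deg r n (vsub d (pdeg r n (fs ! k)))"
      unfolding macaulay_rows_def by (auto simp: less_Suc_eq)
    then show ?thesis
    proof cases
      case 1
      then have "mrow fs x \<in> lin.span (mrow fs ` M3H r n lt fs k d)"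
        using span_k lin.span_base by blast
      then show ?thesis
        using lin.span_mono[OF image_mono[OF M3H_subset_Suc]] by blast
    next
      case 2
      then show ?thesis
        using last_row_in_span_M3H[OF fs mo _ assms(4) span_k] Suc.prems by simp
    qed
  qed
  then show ?case
    unfolding lin.span_eq using M3H_subset_macaulay_rows lin.span_superset by blast
qed

section \<open>Independence of the rows of the last polynomial\<close>

lemma lin_comb_mrow_eq_sum:
  assumes "lin_comb (mrow fs) I p" "\<forall>x\<in>I. fst x < N"
  obtains G where "p = (\<Sum>l<N. G l * fs ! l)" "\<And>l. Poly_Mapping.keys (G l) \<subseteq> {\<gamma>. (l, \<gamma>) \<in> I}"
proof -
  obtain A c where A: "finite A" "A \<subseteq> I" "p = (\<Sum>x\<in>A. Poly_Mapping.single 0 (c x) * mrow fs x)"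
    using assms(1) unfolding lin_comb_def by blast
  define G where "G l = (\<Sum>x\<in>{x \<in> A. fst x = l}. Poly_Mapping.single (snd x) (c x))" for l
  have "p = (\<Sum>x\<in>A. Poly_Mapping.single (snd x) (c x) * fs ! fst x)"
    unfolding A(3) mrow_def by (simp add: mult_single flip: mult.assoc)
  also have "\<dots> = (\<Sum>l<N. \<Sum>x\<in>{x \<in> A. fst x = l}. Poly_Mapping.single (snd x) (c x) * fs ! fst x)"
    using A(1,2) assms(2) by (intro sum.group[symmetric]) auto
  also have "\<dots> = (\<Sum>l<N. G l * fs ! l)"
    unfolding G_def sum_distrib_right by simp
  finally have "p = (\<Sum>l<N. G l * fs ! l)" .
  moreover have "Poly_Mapping.keys (G l) \<subseteq> {\<gamma>. (l, \<gamma>) \<in> I}" for l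
  proof -
    have "Poly_Mapping.keys (G l) \<subseteq>
        (\<Union>x\<in>{x \<in> A. fst x = l}. Poly_Mapping.keys (Poly_Mapping.single (snd x) (c x)))"
      unfolding G_def by (rule keys_sum)
    also have "\<dots> \<subseteq> {\<gamma>. (l, \<gamma>) \<in> I}"
      using A(2) by auto
    finally show ?thesis .
  qed
  ultimately show ?thesis
    by (rule that)
qed

lemma syzygy_of_dependent_last_row:
  assumes "length fs = Suc k" "I \<subseteq> macaulay_rows r n fs (Suc k) d"
    and \<beta>: "\<beta> \<in> mons_deg r n (vsub d (pdeg r n (fs ! k)))"
    and dep: "lin_comb (mrow fs) (I - {(k, \<beta>)}) (mrow fs (k, \<beta>))"
  obtains g where "\<forall>l<length fs. hom_of r n (vsub d (pdeg r n (fs ! l))) (g l)"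
    "(\<Sum>l<length fs. g l * fs ! l) = 0" "Poly_Mapping.lookup (g k) \<beta> = 1"
    "Poly_Mapping.keys (g k) \<subseteq> insert \<beta> {\<gamma>. (k, \<gamma>) \<in> I - {(k, \<beta>)}}"
proof -
  have "\<forall>x\<in>I - {(k, \<beta>)}. fst x < Suc k"
    using assms(2) unfolding macaulay_rows_def by auto
  with dep obtain G where G: "mrow fs (k, \<beta>) = (\<Sum>l<Suc k. G l * fs ! l)"
    "\<And>l. Poly_Mapping.keys (G l) \<subseteq> {\<gamma>. (l, \<gamma>) \<in> I - {(k, \<beta>)}}"
    by (rule lin_comb_mrow_eq_sum) blast+
  define g where "g l = (if l = k then Poly_Mapping.single \<beta> 1 else 0) - G l" for l
  have keys_g: "Poly_Mapping.keys (g l) \<subseteq>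
      (if l = k then {\<beta>} else {}) \<union> {\<gamma>. (l, \<gamma>) \<in> I - {(k, \<beta>)}}" for l
    using keys_diff[of "if l = k then Poly_Mapping.single \<beta> 1 else 0" "G l"] G(2)[of l]
    unfolding g_def by (auto split: if_splits)
  have "hom_of r n (vsub d (pdeg r n (fs ! l))) (g l)" for l
    using keys_g[of l] \<beta> assms(2) unfolding hom_of_iff macaulay_rows_def by (auto split: if_splits)
  moreover have "(\<Sum>l<length fs. g l * fs ! l) = 0"
    unfolding assms(1) g_def left_diff_distrib sum_subtractf G(1)[symmetric]
    by (simp add: mrow_def if_distrib[of "\<lambda>x. x * _"] cong: if_cong)
  moreover have "Poly_Mapping.lookup (G k) \<beta> = 0"
    using G(2)[of k] by (auto simp: in_keys_iff)
  then have "Poly_Mapping.lookup (g k) \<beta> = 1"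
    unfolding g_def by (simp add: lookup_minus)
  moreover have "Poly_Mapping.keys (g k) \<subseteq> insert \<beta> {\<gamma>. (k, \<gamma>) \<in> I - {(k, \<beta>)}}"
    using keys_g[of k] by simp
  ultimately show ?thesis
    using that by blast
qed

lemma H1_vanishes_last_coeff_in_M3H_span:
  assumes fs: "\<forall>f\<in>set fs. f \<noteq> 0 \<and> multihomogeneous r n f" and mo: "monomial_order r n lt"
    and k: "length fs = Suc k" and len: "length d = r" and H1: "H1_vanishes r n fs d"
    and hom: "\<forall>l<length fs. hom_of r n (vsub d (pdeg r n (fs ! l))) (g l)"
    and syz: "(\<Sum>l<length fs. g l * fs ! l) = 0"
  shows "lin_comb (mrow fs) (M3H r n lt fs k (vsub d (pdeg r n (fs ! k)))) (g k)"
proof -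
  let ?e = "vsub d (pdeg r n (fs ! k))"
  obtain h where h: "\<forall>i j. h i j \<in> polys r n"
    "\<forall>l<length fs. g l = (\<Sum>i<l. h i l * fs ! i) - (\<Sum>j\<in>{l<..<length fs}. h l j * fs ! j)"
    using H1 hom syz unfolding H1_vanishes_def by blast
  have "{k<..<length fs} = {}"
    using k by auto
  then have "g k = (\<Sum>i<k. h i k * fs ! i)"
    using h(2) k by simp
  moreover have "hom_of r n ?e (g k)"
    using hom k by simp
  ultimately have "g k \<in> lin.span (mrow fs ` macaulay_rows r n fs k ?e)"
    using k len h(1) by (intro hom_ideal_elem_in_macaulay_span[OF fs]) simp_all
  then show ?thesis
    using span_M3H_eq_span_macaulay_rows[OF fs mo, of k ?e] k len by (simp add: lin_comb_iff_span)
qed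

lemma last_row_not_lin_comb:
  assumes fs: "\<forall>f\<in>set fs. f \<noteq> 0 \<and> multihomogeneous r n f" and mo: "monomial_order r n lt"
    and k: "length fs = Suc k" and len: "length d = r" and H1: "H1_vanishes r n fs d"
    and mem: "(k, \<beta>) \<in> M3H r n lt fs (Suc k) d"
  shows "\<not> lin_comb (mrow fs) (M3H r n lt fs (Suc k) d - {(k, \<beta>)}) (mrow fs (k, \<beta>))"
proof
  let ?e = "vsub d (pdeg r n (fs ! k))"
  let ?I = "M3H r n lt fs (Suc k) d"
  assume dep: "lin_comb (mrow fs) (?I - {(k, \<beta>)}) (mrow fs (k, \<beta>))"
  from mem have \<beta>: "\<beta> \<in> mons_deg r n ?e" "\<beta> \<notin> lead_mons r n lt fs k ?e"
    by (simp_all add: last_row_mem_M3H_iff)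
  obtain g where g: "\<forall>l<length fs. hom_of r n (vsub d (pdeg r n (fs ! l))) (g l)"
    "(\<Sum>l<length fs. g l * fs ! l) = 0" "Poly_Mapping.lookup (g k) \<beta> = 1"
    "Poly_Mapping.keys (g k) \<subseteq> insert \<beta> {\<gamma>. (k, \<gamma>) \<in> ?I - {(k, \<beta>)}}"
    using syzygy_of_dependent_last_row[OF k M3H_subset_macaulay_rows \<beta>(1) dep] by blast
  have "g k \<noteq> 0"
    using g(3) by auto
  moreover have "lin_comb (mrow fs) (M3H r n lt fs k ?e) (g k)"
    using H1_vanishes_last_coeff_in_M3H_span[OF fs mo k len H1 g(1,2)] .
  ultimately have "lm lt (g k) \<in> lead_mons r n lt fs k ?e"
    unfolding lead_mons_def by blast
  moreover have "lm lt (g k) \<in> Poly_Mapping.keys (g k)"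
    using g(1) k \<open>g k \<noteq> 0\<close> by (intro lm_greatest(1)[OF mo]) (auto simp: hom_of_def polys_def)
  ultimately show False
    using g(4) \<beta>(2) by (auto simp: last_row_mem_M3H_iff)
qed

theorem mainTheorem17:
  fixes r :: nat and n :: "nat \<Rightarrow> nat"
    and fs :: "('a::field_char_0) mpoly list"
    and lt :: "mon \<Rightarrow> mon \<Rightarrow> bool"
    and d :: "int list"
  assumes "fs \<noteq> []"
    and "\<forall>f\<in>set fs. f \<noteq> 0 \<and> multihomogeneous r n f"
    and "monomial_order r n lt"
    and "length d = r"
    and "H1_vanishes r n fs d"
  shows "\<forall>\<beta>. (length fs - 1, \<beta>) \<in> M3H r n lt fs (length fs) d \<longrightarrow>
           \<not> lin_comb (mrow fs) (M3H r n lt fs (length fs) d - {(length fs - 1, \<beta>)})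
                (mrow fs (length fs - 1, \<beta>))"
proof -
  obtain k where k: "length fs = Suc k"
    using assms(1) by (cases fs) auto
  show ?thesis
    using last_row_not_lin_comb[OF assms(2,3) k assms(4,5)] k by simp
qed

end
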